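(* Let $f(z)=\sum_{j\ge0}a_jz^j\in\mathcal B_0$. Then \[|a_1|^2+|a_2|^2\le\frac{32}{e^4},\qquad |a_1|^2+|a_2|^2+|a_3|^2\le\frac{27}{2e^3},\] \[|a_1|^2+|a_2|^2+|a_3|^2+|a_4|^2\le\frac{96(33-19\sqrt3)e^{2\sqrt3}}{e^6}.\] In each estimate, equality holds for $f(z)=\exp\big(t\frac{z-1}{z+1}\big)$ for some $t>0$.
   Context: $\mathbb D$ is the open unit disc; $\mathcal B_0=\{f$ holomorphic on $\mathbb D: 0<|f(z)|\le1$ for all $z\in\mathbb D\}$. *)

theory Defs
  imports "HOL-Complex_Analysis.Complex_Analysis"
begin

definition B0 :: "(complex \<Rightarrow> complex) set" where
  "B0 = {f. f holomorphic_on ball 0 1 \<and> (\<forall>z\<in>ball 0 1. 0 < norm (f z) \<and> norm (f z) \<le> 1)}"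

definition taylor_coeff :: "(complex \<Rightarrow> complex) \<Rightarrow> nat \<Rightarrow> complex" where
  "taylor_coeff f j = (deriv ^^ j) f 0 / fact j"

definition extremal :: "real \<Rightarrow> complex \<Rightarrow> complex" where
  "extremal t z = exp (of_real t * ((z - 1) / (z + 1)))"

end

theory Submission
  imports Defs
begin

text \<open>
  A nonconstant \<open>f \<in> B0\<close> satisfies \<open>|f| < 1\<close>, so \<open>f = exp g\<close> with \<open>Re g < 0\<close>; after a rotation
  and scaling by \<open>t = - Re (g 0)\<close>, this writes \<open>f z = c * F (\<omega> z)\<close> with \<open>|c| = 1\<close>,
  \<open>F = extremal t\<close> and \<open>\<omega>\<close> a self-map of the disc fixing \<open>0\<close>. By Rogosinski's theorem the partial
  sums \<open>\<Sum>k\<le>n. |a_k|^2\<close> do not increase under such a subordination, so it suffices to bound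
  them for the extremal functions. Their coefficients are \<open>exp (-t) * p_k t\<close> for polynomials
  \<open>p_k\<close> determined by the differential equation \<open>(1 + z)^2 F' = 2 t F\<close>, and it remains to
  maximise \<open>exp (-2 t) * (\<Sum>j=1..n. p_j t ^ 2)\<close> over \<open>t > 0\<close>; for \<open>n = 2, 3, 4\<close> the maximum
  is attained at \<open>t = 2\<close>, \<open>3/2\<close> and \<open>3 - sqrt 3\<close>.
\<close>

section \<open>Taylor coefficients at the origin\<close>

lemma taylor_coeff_cong:
  assumes "open S" "0 \<in> S" "\<And>z. z \<in> S \<Longrightarrow> u z = v z"
  shows "taylor_coeff u k = taylor_coeff v k"
proof -
  have "\<forall>\<^sub>F z in nhds 0. u z = v z"
    using eventually_nhds_in_open[OF assms(1,2)] by (rule eventually_mono) (use assms(3) in auto)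
  then show ?thesis
    unfolding taylor_coeff_def by (simp add: higher_deriv_cong_ev)
qed

lemma taylor_coeff_0 [simp]: "taylor_coeff u 0 = u 0"
  by (simp add: taylor_coeff_def)

lemma taylor_coeff_const: "taylor_coeff (\<lambda>z. c) k = (if k = 0 then c else 0)"
  by (simp add: taylor_coeff_def)

lemma taylor_coeff_cmult:
  assumes "u analytic_on {0}"
  shows "taylor_coeff (\<lambda>z. c * u z) k = c * taylor_coeff u k"
  using higher_deriv_cmult'[OF assms] by (simp add: taylor_coeff_def)

lemma taylor_coeff_add:
  assumes "u analytic_on {0}" "v analytic_on {0}"
  shows "taylor_coeff (\<lambda>z. u z + v z) k = taylor_coeff u k + taylor_coeff v k"
  using higher_deriv_add_at[OF assms] by (simp add: taylor_coeff_def add_divide_distrib)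

lemma taylor_coeff_mult:
  assumes "u analytic_on {0}" "v analytic_on {0}"
  shows "taylor_coeff (\<lambda>z. u z * v z) k = (\<Sum>i\<le>k. taylor_coeff u i * taylor_coeff v (k - i))"
proof -
  have "taylor_coeff (\<lambda>z. u z * v z) k =
      (\<Sum>i\<le>k. of_nat (k choose i) * (deriv ^^ i) u 0 * (deriv ^^ (k - i)) v 0 / fact k)"
    using higher_deriv_mult_at[OF assms, of k]
    by (simp add: taylor_coeff_def sum_divide_distrib atMost_atLeast0)
  also have "\<dots> = (\<Sum>i\<le>k. taylor_coeff u i * taylor_coeff v (k - i))"
  proof (rule sum.cong[OF refl])
    fix i assume "i \<in> {..k}"
    then have "(of_nat (k choose i) :: complex) = fact k / (fact i * fact (k - i))"
      using binomial_fact by simp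
    then show "of_nat (k choose i) * (deriv ^^ i) u 0 * (deriv ^^ (k - i)) v 0 / fact k =
        taylor_coeff u i * taylor_coeff v (k - i)"
      by (simp add: taylor_coeff_def field_simps)
  qed
  finally show ?thesis .
qed

lemma taylor_coeff_power: "taylor_coeff (\<lambda>z. z ^ n) k = (if k = n then 1 else 0)"
proof -
  have "(deriv ^^ k) (\<lambda>w. w ^ n) (0::complex) = pochhammer (of_nat (Suc n - k)) k * 0 ^ (n - k)"
    using higher_deriv_power[of k 0 n 0] by simp
  then show ?thesis
    by (cases k n rule: linorder_cases)
       (simp_all add: taylor_coeff_def pochhammer_fact[symmetric] pochhammer_0_left)
qed

lemma taylor_coeff_poly:
  "taylor_coeff (\<lambda>z. \<Sum>k\<le>m. d k * z ^ k) j = (if j \<le> m then d j else 0)"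
proof (induction m)
  case 0
  then show ?case
    using taylor_coeff_cmult[of "\<lambda>z. 1" "d 0" j] by (simp add: taylor_coeff_const)
next
  case (Suc m)
  have "taylor_coeff (\<lambda>z. \<Sum>k\<le>Suc m. d k * z ^ k) j =
      taylor_coeff (\<lambda>z. \<Sum>k\<le>m. d k * z ^ k) j + d (Suc m) * taylor_coeff (\<lambda>z. z ^ Suc m) j"
    by (simp add: taylor_coeff_add taylor_coeff_cmult analytic_intros del: power_Suc)
  then show ?case
    by (auto simp: Suc.IH taylor_coeff_power le_Suc_eq simp del: power_Suc)
qed

lemma taylor_coeff_shift:
  assumes "u analytic_on {0}"
  shows "taylor_coeff (\<lambda>z. c + z * u z) (Suc k) = taylor_coeff u k"
proof -
  have "taylor_coeff (\<lambda>z. c + z * u z) (Suc k) = (\<Sum>i\<le>Suc k. taylor_coeff (\<lambda>z. z) i * taylor_coeff u (Suc k - i))"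
    using assms by (simp add: taylor_coeff_add taylor_coeff_const taylor_coeff_mult analytic_intros)
  also have "\<dots> = (\<Sum>i\<in>{1}. taylor_coeff (\<lambda>z. z) i * taylor_coeff u (Suc k - i))"
    by (rule sum.mono_neutral_right) (auto simp: taylor_coeff_def)
  finally show ?thesis
    by (simp add: taylor_coeff_def)
qed

lemma taylor_coeff_deriv:
  "taylor_coeff (deriv u) k = of_nat (Suc k) * taylor_coeff u (Suc k)"
proof -
  have "(deriv ^^ Suc k) u = (deriv ^^ k) (deriv u)"
    by (simp only: funpow_Suc_right comp_apply)
  then show ?thesis
    by (simp add: taylor_coeff_def del: of_nat_Suc)
qed

lemma taylor_coeff_euler:
  assumes "u analytic_on {0}"
  shows "taylor_coeff (\<lambda>z. z * deriv u z) k = of_nat k * taylor_coeff u k"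
proof (cases k)
  case 0
  then show ?thesis by simp
next
  case (Suc j)
  have "deriv u analytic_on {0}"
    using assms by (rule analytic_deriv)
  then show ?thesis
    using taylor_coeff_shift[of "deriv u" 0 j] by (simp add: Suc taylor_coeff_deriv)
qed

section \<open>Coefficient square sums under multiplication and subordination\<close>

definition coeff_square_sum :: "(complex \<Rightarrow> complex) \<Rightarrow> nat \<Rightarrow> real" where
  "coeff_square_sum f n = (\<Sum>k\<le>n. (cmod (taylor_coeff f k))\<^sup>2)"

lemma taylor_coeff_circlepath_integral:
  assumes g: "g holomorphic_on ball 0 R" and r: "0 < r" "r < R"
  shows "((\<lambda>x. g (circlepath 0 r x) * cnj (circlepath 0 r x) ^ k) has_integral
            taylor_coeff g k * of_real r ^ (2 * k)) {0..1}"
proof -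
  have "continuous_on (cball 0 r) g"
    using holomorphic_on_imp_continuous_on[OF g] by (rule continuous_on_subset) (use r in auto)
  moreover have "g holomorphic_on ball 0 r"
    using g by (rule holomorphic_on_subset) (use r in auto)
  ultimately have "((\<lambda>u. g u / (u - 0) ^ Suc k) has_contour_integral
      (2 * pi * \<i>) / fact k * (deriv ^^ k) g 0) (circlepath 0 r)"
    using r by (intro Cauchy_has_contour_integral_higher_derivative_circlepath) auto
  then have "((\<lambda>x. g (circlepath 0 r x) / circlepath 0 r x ^ Suc k *
        vector_derivative (circlepath 0 r) (at x within {0..1}))
      has_integral (2 * pi * \<i>) / fact k * (deriv ^^ k) g 0) {0..1}"
    by (simp add: has_contour_integral_def)
  from has_integral_mult_right[OF this, of "of_real r ^ (2 * k) / (2 * pi * \<i>)"]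
  have *: "((\<lambda>x. of_real r ^ (2 * k) / (2 * pi * \<i>) * (g (circlepath 0 r x) / circlepath 0 r x ^ Suc k *
        vector_derivative (circlepath 0 r) (at x within {0..1})))
      has_integral taylor_coeff g k * of_real r ^ (2 * k)) {0..1}"
    by (simp add: taylor_coeff_def algebra_simps)
  show ?thesis
  proof (rule has_integral_eq[OF _ *])
    fix x :: real assume x: "x \<in> {0..1}"
    define w where "w = circlepath 0 r x"
    have w: "w = of_real r * exp (2 * of_real pi * \<i> * of_real x)"
      by (simp add: w_def circlepath)
    have vd: "vector_derivative (circlepath 0 r) (at x within {0..1}) = 2 * pi * \<i> * w"
      using x by (simp add: vector_derivative_circlepath01 w)
    have nw: "norm w = r"
      using r by (simp add: w norm_mult)
    then have "w \<noteq> 0"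
      using r by auto
    have "cnj w = of_real r ^ 2 / w"
      using r by (simp add: complex_div_cnj[of _ w] nw)
    then have cnj_pow: "cnj w ^ k = of_real r ^ (2 * k) / w ^ k"
      by (simp add: power_divide power_mult)
    show "of_real r ^ (2 * k) / (2 * pi * \<i>) * (g (circlepath 0 r x) / circlepath 0 r x ^ Suc k *
        vector_derivative (circlepath 0 r) (at x within {0..1})) = g (circlepath 0 r x) * cnj (circlepath 0 r x) ^ k"
      unfolding w_def[symmetric] vd cnj_pow using \<open>w \<noteq> 0\<close> by (simp add: field_simps)
  qed
qed

lemma circlepath_integral_Re_mult_cnj_poly:
  assumes g: "g holomorphic_on ball 0 R" and r: "0 < r" "r < R"
    and d: "\<And>k. k \<le> m \<Longrightarrow> taylor_coeff g k = d k"
  shows "((\<lambda>x. Re (g (circlepath 0 r x) * cnj (\<Sum>k\<le>m. d k * circlepath 0 r x ^ k))) has_integral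
            (\<Sum>k\<le>m. (cmod (d k))\<^sup>2 * r ^ (2 * k))) {0..1}"
proof -
  have "((\<lambda>x. \<Sum>k\<le>m. cnj (d k) * (g (circlepath 0 r x) * cnj (circlepath 0 r x) ^ k)) has_integral
      (\<Sum>k\<le>m. cnj (d k) * (taylor_coeff g k * of_real r ^ (2 * k)))) {0..1}"
    by (intro has_integral_sum finite_atMost has_integral_mult_right
        taylor_coeff_circlepath_integral[OF g r])
  also have "(\<Sum>k\<le>m. cnj (d k) * (taylor_coeff g k * of_real r ^ (2 * k))) =
      of_real (\<Sum>k\<le>m. (cmod (d k))\<^sup>2 * r ^ (2 * k))"
    unfolding of_real_sum of_real_mult complex_norm_square by (simp add: d mult_ac)
  finally have "((\<lambda>x. \<Sum>k\<le>m. cnj (d k) * (g (circlepath 0 r x) * cnj (circlepath 0 r x) ^ k)) has_integral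
      of_real (\<Sum>k\<le>m. (cmod (d k))\<^sup>2 * r ^ (2 * k))) {0..1}" .
  from has_integral_linear[OF this bounded_linear_Re] show ?thesis
    by (simp add: o_def sum_distrib_left mult_ac)
qed

lemma Re_mult_cnj_le:
  assumes "norm a \<le> 1"
  shows "Re (a * b * cnj c) \<le> ((cmod b)\<^sup>2 + (cmod c)\<^sup>2) / 2"
proof -
  have "Re (a * b * cnj c) \<le> cmod a * cmod b * cmod c"
    by (metis complex_Re_le_cmod complex_mod_cnj norm_mult)
  also have "\<dots> \<le> cmod b * cmod c"
    using assms by (simp add: mult_left_le_one_le mult.assoc)
  also have "\<dots> \<le> ((cmod b)\<^sup>2 + (cmod c)\<^sup>2) / 2"
    using sum_squares_bound[of "cmod b" "cmod c"] by (simp add: power2_eq_square)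
  finally show ?thesis .
qed

lemma weighted_coeff_square_sum_mult_le:
  assumes w: "\<omega> holomorphic_on ball 0 1" "\<And>z. z \<in> ball 0 1 \<Longrightarrow> norm (\<omega> z) \<le> 1"
    and h: "h holomorphic_on ball 0 1" and r: "0 < r" "r < 1"
  shows "(\<Sum>k\<le>m. (cmod (taylor_coeff (\<lambda>z. \<omega> z * h z) k))\<^sup>2 * r ^ (2 * k))
           \<le> (\<Sum>k\<le>m. (cmod (taylor_coeff h k))\<^sup>2 * r ^ (2 * k))"
proof -
  txt \<open>With \<open>p\<close>, \<open>q\<close> the degree \<open>m\<close> truncations of \<open>h\<close> and \<open>\<omega> h\<close>, the circle averages of
    \<open>Re (\<omega> p cnj q)\<close>, \<open>|p|^2\<close> and \<open>|q|^2\<close> are \<open>Q\<close>, \<open>P\<close> and \<open>Q\<close>, and pointwise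
    \<open>Re (\<omega> p cnj q) \<le> (|p|^2 + |q|^2) / 2\<close>.\<close>
  define c where "c = taylor_coeff (\<lambda>z. \<omega> z * h z)"
  define p where "p z = (\<Sum>k\<le>m. taylor_coeff h k * z ^ k)" for z
  define q where "q z = (\<Sum>k\<le>m. c k * z ^ k)" for z
  define P where "P = (\<Sum>k\<le>m. (cmod (taylor_coeff h k))\<^sup>2 * r ^ (2 * k))"
  define Q where "Q = (\<Sum>k\<le>m. (cmod (c k))\<^sup>2 * r ^ (2 * k))"
  let ?\<gamma> = "circlepath 0 r"
  have hol: "p holomorphic_on ball 0 1" "q holomorphic_on ball 0 1"
      "(\<lambda>z. \<omega> z * p z) holomorphic_on ball 0 1"
    unfolding p_def q_def by (auto intro!: holomorphic_intros w)
  have an: "\<omega> analytic_on {0}" "h analytic_on {0}" "p analytic_on {0}"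
    using w h hol by (auto intro: holomorphic_on_imp_analytic_at)
  have tp: "taylor_coeff p k = (if k \<le> m then taylor_coeff h k else 0)" for k
    unfolding p_def by (rule taylor_coeff_poly)
  have "taylor_coeff (\<lambda>z. \<omega> z * p z) k = c k" if "k \<le> m" for k
    using that an by (auto simp: c_def taylor_coeff_mult tp intro!: sum.cong)
  then have I1: "((\<lambda>x. Re (\<omega> (?\<gamma> x) * p (?\<gamma> x) * cnj (q (?\<gamma> x)))) has_integral Q) {0..1}"
    using circlepath_integral_Re_mult_cnj_poly[OF hol(3) r, of m c] unfolding q_def[symmetric] Q_def[symmetric] by blast
  have I2: "((\<lambda>x. (cmod (p (?\<gamma> x)))\<^sup>2) has_integral P) {0..1}"
    using circlepath_integral_Re_mult_cnj_poly[OF hol(1) r, of m "taylor_coeff h"] tp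
    unfolding p_def[symmetric] P_def[symmetric] complex_norm_square[symmetric] Re_complex_of_real by simp
  have I3: "((\<lambda>x. (cmod (q (?\<gamma> x)))\<^sup>2) has_integral Q) {0..1}"
    using circlepath_integral_Re_mult_cnj_poly[OF hol(2) r, of m c] taylor_coeff_poly[of c m]
    unfolding q_def[symmetric] Q_def[symmetric] complex_norm_square[symmetric] Re_complex_of_real by simp
  have "norm (\<omega> (?\<gamma> x)) \<le> 1" for x
    using r by (intro w(2)) (simp add: circlepath norm_mult)
  then have "Q \<le> (P + Q) / 2"
    by (intro has_integral_le[OF I1 has_integral_divide[OF has_integral_add[OF I2 I3]]] Re_mult_cnj_le)
  then show ?thesis
    by (simp add: P_def Q_def c_def)
qed

lemma coeff_square_sum_mult_le:
  assumes "\<omega> holomorphic_on ball 0 1" "\<And>z. z \<in> ball 0 1 \<Longrightarrow> norm (\<omega> z) \<le> 1"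
    and "h holomorphic_on ball 0 1"
  shows "coeff_square_sum (\<lambda>z. \<omega> z * h z) m \<le> coeff_square_sum h m"
proof -
  define Q where "Q r = (\<Sum>k\<le>m. (cmod (taylor_coeff (\<lambda>z. \<omega> z * h z) k))\<^sup>2 * r ^ (2 * k))" for r :: real
  define P where "P r = (\<Sum>k\<le>m. (cmod (taylor_coeff h k))\<^sup>2 * r ^ (2 * k))" for r :: real
  have "Q 1 \<le> P 1"
  proof (rule tendsto_le[OF trivial_limit_at_left_real])
    show "(P \<longlongrightarrow> P 1) (at_left 1)" "(Q \<longlongrightarrow> Q 1) (at_left 1)"
      unfolding P_def Q_def by (intro tendsto_intros)+
    have "\<forall>\<^sub>F r in at_left 1. r \<in> {0<..<1::real}"
      by (rule eventually_at_left_real) simp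
    then show "\<forall>\<^sub>F r in at_left 1. Q r \<le> P r"
      by eventually_elim (auto simp: P_def Q_def intro!: weighted_coeff_square_sum_mult_le assms)
  qed
  then show ?thesis
    by (simp add: P_def Q_def coeff_square_sum_def)
qed

lemma coeff_square_sum_shift:
  assumes "u analytic_on {0}"
  shows "coeff_square_sum (\<lambda>z. c + z * u z) (Suc n) = (cmod c)\<^sup>2 + coeff_square_sum u n"
  unfolding coeff_square_sum_def sum.atMost_Suc_shift taylor_coeff_shift[OF assms] by simp

lemma coeff_square_sum_split_0:
  "coeff_square_sum f n = (cmod (f 0))\<^sup>2 + (\<Sum>j\<in>{1..n}. (cmod (taylor_coeff f j))\<^sup>2)"
proof -
  have "{..n} = insert 0 {1..n}"
    by auto
  then show ?thesis
    by (simp add: coeff_square_sum_def)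
qed

lemma holomorphic_factor_at_0:
  assumes "f holomorphic_on S" "open S" "0 \<in> S"
  obtains g where "g holomorphic_on S" "\<And>z. f z = f 0 + z * g z"
proof
  show "(\<lambda>z. if z = 0 then deriv f 0 else (f z - f 0) / (z - 0)) holomorphic_on S"
    using assms by (intro pole_lemma) (auto simp: interior_open)
qed auto

lemma Schwarz_factor:
  assumes \<omega>: "\<omega> holomorphic_on ball 0 1" "\<omega> 0 = 0" "\<And>z. z \<in> ball 0 1 \<Longrightarrow> norm (\<omega> z) < 1"
  obtains v where "v holomorphic_on ball 0 1" "\<And>z. \<omega> z = z * v z"
    "\<And>z. z \<in> ball 0 1 \<Longrightarrow> norm (v z) \<le> 1"
proof -
  obtain v where v: "v holomorphic_on ball 0 1" "\<And>z. \<omega> z = \<omega> 0 + z * v z"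
    using holomorphic_factor_at_0[OF \<omega>(1)] by auto
  have Schwarz: "norm (\<omega> z) \<le> norm z" "norm (deriv \<omega> 0) \<le> 1" if "norm z < 1" for z
    using Schwarz_Lemma[OF \<omega>(1,2)] \<omega>(3) that by auto
  have "norm (v z) \<le> 1" if "z \<in> ball 0 1" for z
  proof (cases "z = 0")
    case True
    have "((\<lambda>w. \<omega> 0 + w * v w) has_field_derivative v 0) (at 0)"
      using v(1) by (auto intro!: derivative_eq_intros holomorphic_derivI[where S="ball 0 1"] simp: field_simps)
    then have "deriv \<omega> 0 = v 0"
      using v(2) by (metis DERIV_imp_deriv ext)
    then show ?thesis
      using Schwarz(2)[of 0] True by simp
  next
    case False
    then show ?thesis
      using Schwarz(1)[of z] that v(2)[of z] \<omega>(2) by (simp add: norm_mult)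
  qed
  moreover have "\<omega> z = z * v z" for z
    using v(2)[of z] \<omega>(2) by simp
  ultimately show thesis
    using that v(1) by blast
qed

theorem coeff_square_sum_subordinate_le:
  assumes \<omega>: "\<omega> holomorphic_on ball 0 1" "\<omega> 0 = 0" "\<And>z. z \<in> ball 0 1 \<Longrightarrow> norm (\<omega> z) < 1"
    and "G holomorphic_on ball 0 1"
  shows "coeff_square_sum (\<lambda>z. G (\<omega> z)) n \<le> coeff_square_sum G n"
  using assms(4)
proof (induction n arbitrary: G)
  case 0
  then show ?case
    by (simp add: coeff_square_sum_def \<omega>(2))
next
  case (Suc n)
  txt \<open>Removing the constant terms of \<open>G\<close> and \<open>G \<circ> \<omega>\<close> shifts the index by one, and the
    Schwarz factor \<open>v\<close> of \<open>\<omega>\<close> is absorbed by \<open>coeff_square_sum_mult_le\<close>.\<close>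
  obtain v where v: "v holomorphic_on ball 0 1" "\<And>z. \<omega> z = z * v z"
      "\<And>z. z \<in> ball 0 1 \<Longrightarrow> norm (v z) \<le> 1"
    using Schwarz_factor[OF \<omega>] by blast
  obtain G1 where G1: "G1 holomorphic_on ball 0 1" "\<And>z. G z = G 0 + z * G1 z"
    using holomorphic_factor_at_0[OF Suc.prems] by auto
  have "\<omega> ` ball 0 1 \<subseteq> ball 0 1"
    using \<omega>(3) by auto
  then have G1\<omega>: "(\<lambda>z. G1 (\<omega> z)) holomorphic_on ball 0 1"
    using holomorphic_on_compose_gen[OF \<omega>(1) G1(1)] by (simp add: o_def)
  have "(\<lambda>z. v z * G1 (\<omega> z)) analytic_on {0}"
    by (rule holomorphic_on_imp_analytic_at[of _ "ball 0 1"]) (auto intro!: holomorphic_intros v(1) G1\<omega>)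
  moreover have "(\<lambda>z. G (\<omega> z)) = (\<lambda>z. G 0 + z * (v z * G1 (\<omega> z)))"
  proof
    fix z
    show "G (\<omega> z) = G 0 + z * (v z * G1 (\<omega> z))"
      using G1(2)[of "\<omega> z"] v(2)[of z] by (metis mult.assoc)
  qed
  ultimately have "coeff_square_sum (\<lambda>z. G (\<omega> z)) (Suc n)
      = (cmod (G 0))\<^sup>2 + coeff_square_sum (\<lambda>z. v z * G1 (\<omega> z)) n"
    by (simp add: coeff_square_sum_shift)
  also have "\<dots> \<le> (cmod (G 0))\<^sup>2 + coeff_square_sum (\<lambda>z. G1 (\<omega> z)) n"
    using coeff_square_sum_mult_le[OF v(1) v(3) G1\<omega>] by simp
  also have "\<dots> \<le> (cmod (G 0))\<^sup>2 + coeff_square_sum G1 n"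
    using Suc.IH[OF G1(1)] by simp
  also have "\<dots> = coeff_square_sum (\<lambda>z. G 0 + z * G1 z) (Suc n)"
    using G1(1) by (simp add: coeff_square_sum_shift holomorphic_on_imp_analytic_at)
  also have "(\<lambda>z. G 0 + z * G1 z) = G"
    by (rule ext) (rule G1(2)[symmetric])
  finally show ?case .
qed

section \<open>The extremal functions\<close>

lemma extremal_holomorphic: "extremal t holomorphic_on - {-1}"
proof -
  have "z + 1 \<noteq> 0" if "z \<in> - {-1}" for z :: complex
    using that by (simp add: eq_neg_iff_add_eq_0[symmetric])
  then show ?thesis
    unfolding extremal_def by (intro holomorphic_intros) auto
qed

lemma extremal_analytic_at_0: "extremal t analytic_on {0}"
  using extremal_holomorphic by (rule holomorphic_on_imp_analytic_at) auto

lemma extremal_ode: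
  assumes "z \<noteq> -1"
  shows "(z + 1)\<^sup>2 * deriv (extremal t) z = 2 * of_real t * extremal t z"
proof -
  have nz: "z + 1 \<noteq> 0"
    using assms by (simp add: eq_neg_iff_add_eq_0[symmetric])
  have "(extremal t has_field_derivative extremal t z * (2 * of_real t / (z + 1)\<^sup>2)) (at z)"
    unfolding extremal_def using nz
    by (auto intro!: derivative_eq_intros simp: field_simps power2_eq_square)
  then show ?thesis
    using nz by (simp add: DERIV_imp_deriv)
qed

lemma extremal_coeff_recurrence:
  "of_nat (k + 2) * taylor_coeff (extremal t) (k + 2)
     = (2 * of_real t - 2 * of_nat (k + 1)) * taylor_coeff (extremal t) (k + 1)
       - of_nat k * taylor_coeff (extremal t) k"
proof -
  let ?E = "extremal t" and ?E' = "deriv (extremal t)"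
  have an: "?E' analytic_on {0}" "(\<lambda>z. z * ?E' z) analytic_on {0}"
    using extremal_analytic_at_0 by (auto intro!: analytic_intros analytic_deriv)
  have "(\<lambda>z. (z + 1)\<^sup>2 * ?E' z) = (\<lambda>z. ?E' z + (2 * (z * ?E' z) + z * (z * ?E' z)))"
    by (auto simp: power2_eq_square algebra_simps)
  then have "taylor_coeff (\<lambda>z. (z + 1)\<^sup>2 * ?E' z) (Suc k)
      = taylor_coeff ?E' (Suc k) + (2 * taylor_coeff (\<lambda>z. z * ?E' z) (Suc k) + taylor_coeff (\<lambda>z. z * ?E' z) k)"
    using an by (simp add: taylor_coeff_add taylor_coeff_cmult taylor_coeff_shift[of _ 0, simplified] analytic_intros)
  also have "\<dots> = of_nat (k + 2) * taylor_coeff ?E (k + 2) + 2 * of_nat (k + 1) * taylor_coeff ?E (k + 1)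
      + of_nat k * taylor_coeff ?E k"
    using extremal_analytic_at_0 by (simp add: taylor_coeff_deriv taylor_coeff_euler algebra_simps)
  also have "taylor_coeff (\<lambda>z. (z + 1)\<^sup>2 * ?E' z) (Suc k) = taylor_coeff (\<lambda>z. 2 * of_real t * ?E z) (Suc k)"
    using open_ball[of 0 1] by (rule taylor_coeff_cong) (auto intro!: extremal_ode)
  also have "\<dots> = 2 * of_real t * taylor_coeff ?E (k + 1)"
    using extremal_analytic_at_0 by (simp add: taylor_coeff_cmult)
  finally show ?thesis
    by (simp add: algebra_simps)
qed

text \<open>\<open>extremal_coeff_poly k t = (-1)^k L_k^(-1) (2 t)\<close> with generalised Laguerre polynomials.\<close>

fun extremal_coeff_poly :: "nat \<Rightarrow> real \<Rightarrow> real" where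
  "extremal_coeff_poly 0 t = 1"
| "extremal_coeff_poly (Suc 0) t = 2 * t"
| "extremal_coeff_poly (Suc (Suc k)) t =
     ((2 * t - 2 * (k + 1)) * extremal_coeff_poly (Suc k) t - k * extremal_coeff_poly k t) / (k + 2)"

definition energy_poly :: "nat \<Rightarrow> real \<Rightarrow> real" where
  "energy_poly n t = (\<Sum>j\<in>{1..n}. (extremal_coeff_poly j t)\<^sup>2)"

lemma taylor_coeff_extremal:
  "taylor_coeff (extremal t) k = of_real (exp (- t) * extremal_coeff_poly k t)"
proof (induction k t rule: extremal_coeff_poly.induct)
  case (1 t)
  then show ?case
    by (simp add: extremal_def flip: exp_of_real)
next
  case (2 t)
  have "extremal t 0 = of_real (exp (- t))"
    by (simp add: extremal_def flip: exp_of_real)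
  moreover have "deriv (extremal t) 0 = 2 * of_real t * extremal t 0"
    using extremal_ode[of 0 t] by simp
  ultimately show ?case
    using taylor_coeff_deriv[of "extremal t" 0] by (simp add: mult_ac)
next
  case (3 k t)
  define X where "X = exp (- t) * ((2 * t - 2 * (k + 1)) * extremal_coeff_poly (Suc k) t
                                    - k * extremal_coeff_poly k t)"
  have "of_nat (k + 2) * taylor_coeff (extremal t) (k + 2) = of_real X"
    using extremal_coeff_recurrence[of k t] 3 by (simp add: X_def algebra_simps)
  moreover have "(of_nat (k + 2) :: complex) \<noteq> 0"
    by (simp only: of_nat_eq_0_iff)
  ultimately have "taylor_coeff (extremal t) (k + 2) = of_real X / of_nat (k + 2)"
    by (metis eq_divide_imp mult.commute)
  also have "\<dots> = of_real (X / (k + 2))"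
    by simp
  also have "X / (k + 2) = exp (- t) * extremal_coeff_poly (Suc (Suc k)) t"
    by (simp add: X_def add.commute)
  finally show ?case
    by simp
qed

lemma extremal_coeff_poly_2_3_4:
  "extremal_coeff_poly 2 t = 2 * t * (t - 1)"
  "extremal_coeff_poly 3 t = 2 * t * (2 * t\<^sup>2 - 6 * t + 3) / 3"
  "extremal_coeff_poly 4 t = 2 * t * (t ^ 3 - 6 * t\<^sup>2 + 9 * t - 3) / 3"
  by (simp_all add: eval_nat_numeral field_simps)

lemma extremal_coeff_square_sum:
  "(\<Sum>j\<in>{1..n}. (cmod (taylor_coeff (extremal t) j))\<^sup>2)
     = exp (- 2 * t) * energy_poly n t"
proof -
  have "exp (- t) ^ 2 = exp (- 2 * t)"
    by (simp add: power2_eq_square flip: exp_add)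
  then have "(cmod (taylor_coeff (extremal t) j))\<^sup>2 = exp (- 2 * t) * (extremal_coeff_poly j t)\<^sup>2" for j
    by (simp add: taylor_coeff_extremal norm_mult power_mult_distrib)
  then show ?thesis
    by (simp add: energy_poly_def sum_distrib_left)
qed

section \<open>Reduction of the class B0 to the extremal functions\<close>

lemma B0_constant_or_norm_less_1:
  assumes "f \<in> B0"
  shows "(\<exists>c. \<forall>z\<in>ball 0 1. f z = c) \<or> (\<forall>z\<in>ball 0 1. norm (f z) < 1)"
proof (cases "\<exists>z0\<in>ball 0 1. norm (f z0) = 1")
  case True
  then obtain z0 where z0: "z0 \<in> ball 0 1" "norm (f z0) = 1"
    by blast
  have "f holomorphic_on ball 0 1" "\<And>z. z \<in> ball 0 1 \<Longrightarrow> norm (f z) \<le> norm (f z0)"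
    using assms z0(2) by (auto simp: B0_def)
  then have "f constant_on ball 0 1"
    by (intro maximum_modulus_principle[OF _ open_ball connected_ball open_ball order_refl z0(1)])
  then show ?thesis
    by (auto simp: constant_on_def)
next
  case False
  have "norm (f z) < 1" if "z \<in> ball 0 1" for z
  proof -
    have "norm (f z) \<le> 1"
      using assms that by (simp add: B0_def)
    moreover have "norm (f z) \<noteq> 1"
      using False that by blast
    ultimately show ?thesis
      by simp
  qed
  then show ?thesis
    by blast
qed

lemma norm_Cayley_less_1:
  assumes "Re w < 0"
  shows "norm ((1 + w) / (1 - w)) < 1"
proof -
  have "(norm (1 + w))\<^sup>2 < (norm (1 - w))\<^sup>2"
    using assms by (simp only: cmod_power2) (simp add: power2_eq_square algebra_simps)
  then have "norm (1 + w) < norm (1 - w)"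
    by (meson norm_ge_zero power_less_imp_less_base)
  then show ?thesis
    by (simp add: norm_divide divide_less_eq)
qed

lemma Cayley_inverse:
  fixes w :: complex
  assumes "1 - w \<noteq> 0"
  shows "((1 + w) / (1 - w) - 1) / ((1 + w) / (1 - w) + 1) = w"
proof -
  have "(1 + w) / (1 - w) - 1 = 2 * w / (1 - w)" "(1 + w) / (1 - w) + 1 = 2 / (1 - w)"
    using assms by (simp_all add: field_simps)
  then show ?thesis
    using assms by simp
qed

lemma B0_subordinate_extremal:
  assumes "f \<in> B0" "\<And>z. z \<in> ball 0 1 \<Longrightarrow> norm (f z) < 1"
  obtains t c \<omega> where "t > 0" "norm c = 1" "\<omega> holomorphic_on ball 0 1" "\<omega> 0 = 0"
    "\<And>z. z \<in> ball 0 1 \<Longrightarrow> norm (\<omega> z) < 1"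
    "\<And>z. z \<in> ball 0 1 \<Longrightarrow> f z = c * extremal t (\<omega> z)"
proof -
  have holf: "f holomorphic_on ball 0 1" and nz: "\<And>z. z \<in> ball 0 1 \<Longrightarrow> f z \<noteq> 0"
    using assms(1) by (auto simp: B0_def)
  obtain g where holg: "g holomorphic_on ball 0 1" and fg: "\<And>z. z \<in> ball 0 1 \<Longrightarrow> f z = exp (g z)"
    using contractible_imp_holomorphic_log[OF holf convex_imp_contractible[OF convex_ball]] nz
    by metis
  have Re_g: "Re (g z) < 0" if "z \<in> ball 0 1" for z
    using assms(2)[OF that] fg[OF that] by simp
  txt \<open>\<open>h\<close> is \<open>g\<close> rotated and scaled so that \<open>Re h < 0\<close> and \<open>h 0 = -1\<close>;
    \<open>\<omega>\<close> is its Cayley transform.\<close>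
  define t where "t = - Re (g 0)"
  define c where "c = exp (\<i> * of_real (Im (g 0)))"
  define h where "h z = (g z - \<i> * of_real (Im (g 0))) / of_real t" for z
  define \<omega> where "\<omega> z = (1 + h z) / (1 - h z)" for z
  have t: "t > 0"
    using Re_g[of 0] by (simp add: t_def)
  have Re_h: "Re (h z) < 0" if "z \<in> ball 0 1" for z
    using Re_g[OF that] t by (simp add: h_def Re_divide_of_real divide_neg_pos)
  have h_ne_1: "1 - h z \<noteq> 0" if "z \<in> ball 0 1" for z
    using Re_h[OF that] by (auto simp: complex_eq_iff)
  have "h holomorphic_on ball 0 1"
    unfolding h_def using t by (intro holomorphic_intros holg) auto
  then have hol_\<omega>: "\<omega> holomorphic_on ball 0 1"
    unfolding \<omega>_def using h_ne_1 by (intro holomorphic_intros) auto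
  have "h 0 = -1"
    using t by (simp add: h_def t_def complex_eq_iff)
  then have \<omega>0: "\<omega> 0 = 0"
    by (simp add: \<omega>_def)
  have \<omega>_lt_1: "norm (\<omega> z) < 1" if "z \<in> ball 0 1" for z
    unfolding \<omega>_def using Re_h[OF that] by (rule norm_Cayley_less_1)
  have f_eq: "f z = c * extremal t (\<omega> z)" if z: "z \<in> ball 0 1" for z
  proof -
    have "(\<omega> z - 1) / (\<omega> z + 1) = h z"
      unfolding \<omega>_def using h_ne_1[OF z] by (rule Cayley_inverse)
    then have "c * extremal t (\<omega> z) = exp (\<i> * of_real (Im (g 0)) + of_real t * h z)"
      by (simp add: c_def extremal_def exp_add)
    also have "\<dots> = f z"
      using t fg[OF z] by (simp add: h_def)
    finally show ?thesis ..
  qed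
  have "norm c = 1"
    by (simp add: c_def)
  from that[OF t this hol_\<omega> \<omega>0 \<omega>_lt_1 f_eq] show thesis .
qed

lemma B0_coeff_square_sum_le_extremal:
  assumes "f \<in> B0" "\<And>z. z \<in> ball 0 1 \<Longrightarrow> norm (f z) < 1"
  obtains t where "t > 0"
    "\<And>n. (\<Sum>j\<in>{1..n}. (cmod (taylor_coeff f j))\<^sup>2)
           \<le> (\<Sum>j\<in>{1..n}. (cmod (taylor_coeff (extremal t) j))\<^sup>2)"
proof -
  obtain t c \<omega> where t: "t > 0" and c: "norm c = 1" and \<omega>: "\<omega> holomorphic_on ball 0 1" "\<omega> 0 = 0"
      "\<And>z. z \<in> ball 0 1 \<Longrightarrow> norm (\<omega> z) < 1"
    and f: "\<And>z. z \<in> ball 0 1 \<Longrightarrow> f z = c * extremal t (\<omega> z)"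
    using B0_subordinate_extremal[OF assms] by blast
  have "\<omega> ` ball 0 1 \<subseteq> - {-1}"
    using \<omega>(3) by force
  then have hol: "(\<lambda>z. extremal t (\<omega> z)) holomorphic_on ball 0 1"
    using holomorphic_on_compose_gen[OF \<omega>(1) extremal_holomorphic, of t] by (simp add: o_def)
  have "taylor_coeff f j = c * taylor_coeff (\<lambda>z. extremal t (\<omega> z)) j" for j
  proof -
    have "taylor_coeff f j = taylor_coeff (\<lambda>z. c * extremal t (\<omega> z)) j"
      by (rule taylor_coeff_cong[OF open_ball[of 0 1]]) (auto simp: f)
    also have "\<dots> = c * taylor_coeff (\<lambda>z. extremal t (\<omega> z)) j"
      using hol by (simp add: taylor_coeff_cmult holomorphic_on_imp_analytic_at)
    finally show ?thesis .
  qed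
  then have "(\<Sum>j\<in>{1..n}. (cmod (taylor_coeff f j))\<^sup>2)
      = (\<Sum>j\<in>{1..n}. (cmod (taylor_coeff (\<lambda>z. extremal t (\<omega> z)) j))\<^sup>2)" for n
    by (simp add: norm_mult c)
  moreover have "(\<Sum>j\<in>{1..n}. (cmod (taylor_coeff (\<lambda>z. extremal t (\<omega> z)) j))\<^sup>2)
      \<le> (\<Sum>j\<in>{1..n}. (cmod (taylor_coeff (extremal t) j))\<^sup>2)" for n
    using coeff_square_sum_subordinate_le[OF \<omega> holomorphic_on_subset[OF extremal_holomorphic], of t n]
    by (simp add: coeff_square_sum_split_0 \<omega>(2))
  ultimately show thesis
    using that[OF t] by simp
qed

lemma B0_coeff_square_sum_le:
  assumes "f \<in> B0" "0 \<le> B"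
    and "\<And>t. t > 0 \<Longrightarrow> (\<Sum>j\<in>{1..n}. (cmod (taylor_coeff (extremal t) j))\<^sup>2) \<le> B"
  shows "(\<Sum>j\<in>{1..n}. (cmod (taylor_coeff f j))\<^sup>2) \<le> B"
  using B0_constant_or_norm_less_1[OF assms(1)]
proof
  assume "\<exists>c. \<forall>z\<in>ball 0 1. f z = c"
  then obtain c where c: "\<And>z. z \<in> ball 0 1 \<Longrightarrow> f z = c"
    by blast
  have "taylor_coeff f j = taylor_coeff (\<lambda>z. c) j" for j
    by (rule taylor_coeff_cong[OF open_ball[of 0 1]]) (auto simp: c)
  then show ?thesis
    using assms(2) by (simp add: taylor_coeff_const)
next
  assume "\<forall>z\<in>ball 0 1. norm (f z) < 1"
  then obtain t where "t > 0" "(\<Sum>j\<in>{1..n}. (cmod (taylor_coeff f j))\<^sup>2)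
      \<le> (\<Sum>j\<in>{1..n}. (cmod (taylor_coeff (extremal t) j))\<^sup>2)"
    using B0_coeff_square_sum_le_extremal[OF assms(1)] by blast
  then show ?thesis
    using assms(3) by fastforce
qed

section \<open>Maximisation over the parameter\<close>

lemma energy_poly_2: "energy_poly 2 t = (2 * t)\<^sup>2 + (2 * t * (t - 1))\<^sup>2"
  and energy_poly_3: "energy_poly 3 t = energy_poly 2 t + (2 * t * (2 * t\<^sup>2 - 6 * t + 3) / 3)\<^sup>2"
  and energy_poly_4: "energy_poly 4 t = energy_poly 3 t + (2 * t * (t ^ 3 - 6 * t\<^sup>2 + 9 * t - 3) / 3)\<^sup>2"
proof -
  have "{1..2::nat} = {1, 2}" "{1..3::nat} = {1, 2, 3}" "{1..4::nat} = {1, 2, 3, 4}"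
    by auto
  then show "energy_poly 2 t = (2 * t)\<^sup>2 + (2 * t * (t - 1))\<^sup>2"
    "energy_poly 3 t = energy_poly 2 t + (2 * t * (2 * t\<^sup>2 - 6 * t + 3) / 3)\<^sup>2"
    "energy_poly 4 t = energy_poly 3 t + (2 * t * (t ^ 3 - 6 * t\<^sup>2 + 9 * t - 3) / 3)\<^sup>2"
    by (simp_all add: energy_poly_def extremal_coeff_poly_2_3_4 One_nat_def)
qed

lemma unimodal_le_peak:
  fixes \<phi> :: "real \<Rightarrow> real"
  assumes deriv: "\<And>x. (\<phi> has_real_derivative \<phi>' x) (at x)"
    and up: "\<And>x. a < x \<Longrightarrow> x < m \<Longrightarrow> \<phi>' x \<ge> 0"
    and down: "\<And>x. m < x \<Longrightarrow> x < b \<Longrightarrow> \<phi>' x \<le> 0"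
    and t: "a \<le> t" "t \<le> b"
  shows "\<phi> t \<le> \<phi> m"
proof -
  have cont: "continuous_on S \<phi>" for S
    using deriv by (meson DERIV_isCont continuous_at_imp_continuous_on)
  show ?thesis
  proof (cases "t \<le> m")
    case True
    show ?thesis
      by (rule DERIV_nonneg_imp_increasing_open[OF True _ cont]) (use deriv up t in force)
  next
    case False
    show ?thesis
      by (rule DERIV_nonpos_imp_decreasing_open[of m t, OF _ _ cont]) (use deriv down t False in force)+
  qed
qed

lemma exp_partial_sum_le:
  fixes x :: real
  assumes "0 \<le> x"
  shows "(\<Sum>k\<le>N. x ^ k / fact k) \<le> exp x"
proof -
  have sums: "(\<lambda>k. x ^ k / fact k) sums exp x"
    using exp_converges[of x] by (simp add: divide_inverse_commute scaleR_conv_of_real mult.commute)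
  have "(\<Sum>k\<le>N. x ^ k / fact k) \<le> (\<Sum>k. x ^ k / fact k)"
    by (rule sum_le_suminf) (use sums assms in \<open>auto simp: sums_iff\<close>)
  then show ?thesis
    using sums by (simp add: sums_iff)
qed

lemma energy_2_deriv:
  "((\<lambda>x. exp (-2 * x) * energy_poly 2 x) has_real_derivative exp (-2 * x) * (-8 * x * (x - 1)\<^sup>2 * (x - 2))) (at x)"
  unfolding energy_poly_2 by (auto intro!: derivative_eq_intros) algebra

lemma energy_3_deriv:
  "((\<lambda>x. exp (-2 * x) * energy_poly 3 x) has_real_derivative
     exp (-2 * x) * (8/9 * x * (2 * x - 3) * (x - 3) * (3 - 9 * x + 9 * x\<^sup>2 - 2 * x ^ 3))) (at x)"
  unfolding energy_poly_3 energy_poly_2 by (auto intro!: derivative_eq_intros) algebra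

lemma energy_4_deriv:
  "((\<lambda>x. exp (-2 * x) * energy_poly 4 x) has_real_derivative
     exp (-2 * x) * (- 8/9 * x * (x\<^sup>2 - 6 * x + 6) * (x - 2) * (x ^ 4 - 8 * x ^ 3 + 18 * x\<^sup>2 - 12 * x + 3))) (at x)"
  unfolding energy_poly_4 energy_poly_3 energy_poly_2 by (auto intro!: derivative_eq_intros) algebra

lemma energy_3_critical_factor_nonneg:
  fixes x :: real
  assumes "0 \<le> x" "x \<le> 3"
  shows "0 \<le> 3 - 9 * x + 9 * x\<^sup>2 - 2 * x ^ 3"
proof (cases "x \<le> 1")
  case True
  have "x * (x * x) \<le> x * x"
    by (rule mult_left_le_one_le) (use True assms in auto)
  then have "x ^ 3 \<le> x\<^sup>2"
    by (simp add: power3_eq_cube power2_eq_square mult.assoc)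
  moreover have "3 - 9 * x + 7 * x\<^sup>2 = 7 * (x - 9/14)\<^sup>2 + 3/28"
    by algebra
  moreover have "0 \<le> (x - 9/14)\<^sup>2"
    by simp
  ultimately show ?thesis
    by linarith
next
  case False
  define w where "w = x - 1"
  have w: "0 \<le> w" "w \<le> 2"
    using False assms by (auto simp: w_def)
  have "w * (w * w) \<le> 2 * (w * w)" "w * w \<le> 2 * w"
    using w by (simp_all add: mult_right_mono)
  then have "w ^ 3 \<le> 2 * w\<^sup>2" "w\<^sup>2 \<le> 2 * w"
    by (simp_all add: power3_eq_cube power2_eq_square mult.assoc)
  moreover have "3 - 9 * x + 9 * x\<^sup>2 - 2 * x ^ 3 = 1 + 3 * w + 3 * w\<^sup>2 - 2 * w ^ 3"
    unfolding w_def by algebra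
  ultimately show ?thesis
    using w by linarith
qed

lemma energy_4_critical_factor_nonneg:
  fixes x :: real
  assumes "0 \<le> x" "x \<le> 2"
  shows "0 \<le> x ^ 4 - 8 * x ^ 3 + 18 * x\<^sup>2 - 12 * x + 3"
proof -
  define s where "s = x - 1"
  have e: "x ^ 4 - 8 * x ^ 3 + 18 * x\<^sup>2 - 12 * x + 3 = 2 + 4 * s - 4 * s ^ 3 + s ^ 4"
    unfolding s_def by algebra
  show ?thesis
  proof (cases "s \<ge> 0")
    case True
    have "s * s \<le> 1"
      using True assms by (intro mult_le_one) (auto simp: s_def)
    then have "s * (s * s) \<le> s"
      using True by (rule mult_left_le)
    then have "s ^ 3 \<le> s"
      by (simp add: power3_eq_cube mult.assoc)
    then show ?thesis
      using e True zero_le_power[of s 4] by linarith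
  next
    case False
    have "2 + 4 * s - 4 * s ^ 3 + s ^ 4 = 4 * (-s) * (-s - 1/2)\<^sup>2 + 4 * (-s - 5/8)\<^sup>2 + 7/16 + s ^ 4"
      by algebra
    moreover have "0 \<le> 4 * (-s) * (-s - 1/2)\<^sup>2" "0 \<le> (-s - 5/8)\<^sup>2" "0 \<le> s ^ 4"
      using False by (simp_all add: mult_nonpos_nonneg)
    ultimately show ?thesis
      using e by linarith
  qed
qed

text \<open>Far from the peak, \<open>exp\<close> is bounded below by a Taylor polynomial; the remaining
  polynomial inequalities are certified by writing the difference with nonnegative coefficients
  in \<open>u \<ge> 0\<close>, or in Bernstein form in \<open>s \<in> [0, 1]\<close>.\<close>

lemma energy_poly_3_tail:
  assumes "3 \<le> t"
  shows "energy_poly 3 t \<le> 27/2 * exp (2 * t - 3)"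
proof -
  define T where "T x = 1 + x + x^2/2 + x^3/6 + x^4/24 + x^5/120 + x^6/720 + x^7/5040" for x :: real
  define u where "u = t - 3"
  have u: "0 \<le> u"
    using assms by (simp add: u_def)
  define C where "C = (29079/560) + (7371/80) * u + (264/5) * u^2 + (59/4) * u^3 + (35/3) * u^4 + (139/15) * u^5 + (136/45) * u^6 + (12/35) * u^7"
  have "27/2 * T (3 + 2 * u) - energy_poly 3 (3 + u) = C"
    unfolding C_def T_def energy_poly_3 energy_poly_2 by algebra
  moreover have "0 \<le> C"
    unfolding C_def using u by (intro add_nonneg_nonneg mult_nonneg_nonneg zero_le_power) auto
  moreover have "T (3 + 2 * u) \<le> exp (3 + 2 * u)"
    using exp_partial_sum_le[of "3 + 2 * u" 7] u by (simp add: T_def eval_nat_numeral fact_numeral)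
  moreover have "3 + u = t" "3 + 2 * u = 2 * t - 3"
    by (simp_all add: u_def)
  ultimately show ?thesis
    by simp
qed

lemma energy_poly_4_tail:
  assumes "2 \<le> t"
  shows "energy_poly 4 t \<le> 42/5 * exp (2 * t - 5/2)"
proof -
  define T where "T x = 1 + x + x^2/2 + x^3/6 + x^4/24 + x^5/120 + x^6/720 + x^7/5040 + x^8/40320
      + x^9/362880 + x^10/3628800 + x^11/39916800 + x^12/479001600" for x :: real
  have "T (2 * t - 5/2) \<le> exp (2 * t - 5/2)"
    using exp_partial_sum_le[of "2 * t - 5/2" 12] assms by (simp add: T_def eval_nat_numeral fact_numeral)
  moreover have "energy_poly 4 t \<le> 42/5 * T (2 * t - 5/2)"
  proof (cases "t \<le> 7/2")
    case True
    define s where "s = (t - 2) * 2 / 3"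
    have s: "0 \<le> s" "s \<le> 1"
      using assms True by (auto simp: s_def)
    define C where "C = (54256625729/25952256000) * s^0 * (1-s)^12
        + (6165524309/196608000) * s^1 * (1-s)^11 + (1071541283/5242880) * s^2 * (1-s)^10
        + (18269863579/23592960) * s^3 * (1-s)^9 + (102880537729/52428800) * s^4 * (1-s)^8
        + (122437041447/32768000) * s^5 * (1-s)^7 + (1164588497159/196608000) * s^6 * (1-s)^6
        + (52745934491/6553600) * s^7 * (1-s)^5 + (18386908137/2097152) * s^8 * (1-s)^4
        + (817642168487/117964800) * s^9 * (1-s)^3 + (1419889533121/393216000) * s^10 * (1-s)^2
        + (789024981677/720896000) * s^11 * (1-s)^1 + (68736793991/471859200) * s^12 * (1-s)^0"
    have "42/5 * T (3/2 + 3 * s) - energy_poly 4 (2 + 3/2 * s) = C"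
      unfolding C_def T_def energy_poly_4 energy_poly_3 energy_poly_2 by algebra
    moreover have "0 \<le> C"
      unfolding C_def using s by (intro add_nonneg_nonneg mult_nonneg_nonneg zero_le_power) auto
    moreover have "2 + 3/2 * s = t" "3/2 + 3 * s = 2 * t - 5/2"
      by (simp_all add: s_def field_simps)
    ultimately show ?thesis
      by (metis diff_ge_0_iff_ge)
  next
    case False
    define u where "u = t - 7/2"
    have u: "0 \<le> u"
      using False by (simp add: u_def)
    define C where "C = (68736793991/471859200) + (706724362237/1622016000) * u + (38855276047/73728000) * u^2 + (561691043/1843200) * u^3
        + (143507761/1843200) * u^4 + (522323/57600) * u^5 + (1195441/144000) * u^6
        + (114979/18000) * u^7 + (15193/7200) * u^8 + (493/1350) * u^9 + (1/27) * u^10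
        + (8/3375) * u^11 + (8/111375) * u^12"
    have "42/5 * T (9/2 + 2 * u) - energy_poly 4 (7/2 + u) = C"
      unfolding C_def T_def energy_poly_4 energy_poly_3 energy_poly_2 by algebra
    moreover have "0 \<le> C"
      unfolding C_def using u by (intro add_nonneg_nonneg mult_nonneg_nonneg zero_le_power) auto
    moreover have "7/2 + u = t" "9/2 + 2 * u = 2 * t - 5/2"
      by (simp_all add: u_def field_simps)
    ultimately show ?thesis
      by (metis diff_ge_0_iff_ge)
  qed
  ultimately show ?thesis
    by simp
qed

lemma energy_2_le_max:
  assumes "0 \<le> t"
  shows "exp (-2 * t) * energy_poly 2 t \<le> exp (-2 * 2) * energy_poly 2 2"
proof (rule unimodal_le_peak[OF energy_2_deriv, where a=0 and b="t + 1"])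
  fix x :: real
  assume "0 < x" "x < 2"
  then have "0 \<le> 8 * x * (x - 1)\<^sup>2 * (2 - x)"
    by simp
  moreover have "-8 * x * (x - 1)\<^sup>2 * (x - 2) = 8 * x * (x - 1)\<^sup>2 * (2 - x)"
    by algebra
  ultimately show "0 \<le> exp (-2 * x) * (-8 * x * (x - 1)\<^sup>2 * (x - 2))"
    by (metis exp_ge_zero mult_nonneg_nonneg)
next
  fix x :: real
  assume "2 < x" "x < t + 1"
  then have "0 \<le> 8 * x * (x - 1)\<^sup>2 * (x - 2)"
    by simp
  moreover have "-8 * x * (x - 1)\<^sup>2 * (x - 2) = - (8 * x * (x - 1)\<^sup>2 * (x - 2))"
    by algebra
  ultimately show "exp (-2 * x) * (-8 * x * (x - 1)\<^sup>2 * (x - 2)) \<le> 0"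
    by (metis exp_ge_zero mult_nonneg_nonpos neg_le_0_iff_le)
qed (use assms in auto)

lemma energy_3_le_max:
  assumes "0 \<le> t"
  shows "exp (-2 * t) * energy_poly 3 t \<le> exp (-2 * (3/2)) * energy_poly 3 (3/2)"
proof (cases "t \<le> 3")
  case True
  show ?thesis
  proof (rule unimodal_le_peak[OF energy_3_deriv, where a=0 and b=3])
    fix x :: real
    assume x: "0 < x" "x < 3/2"
    then have "0 \<le> 8/9 * x * (3 - 2 * x) * (3 - x) * (3 - 9 * x + 9 * x\<^sup>2 - 2 * x ^ 3)"
      by (intro mult_nonneg_nonneg energy_3_critical_factor_nonneg) auto
    moreover have "8/9 * x * (2 * x - 3) * (x - 3) = 8/9 * x * (3 - 2 * x) * (3 - x)"
      by algebra
    ultimately show "0 \<le> exp (-2 * x) * (8/9 * x * (2 * x - 3) * (x - 3) * (3 - 9 * x + 9 * x\<^sup>2 - 2 * x ^ 3))"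
      by (metis exp_ge_zero mult_nonneg_nonneg)
  next
    fix x :: real
    assume x: "3/2 < x" "x < 3"
    then have "0 \<le> 8/9 * x * (2 * x - 3) * (3 - x) * (3 - 9 * x + 9 * x\<^sup>2 - 2 * x ^ 3)"
      by (intro mult_nonneg_nonneg energy_3_critical_factor_nonneg) auto
    moreover have "8/9 * x * (2 * x - 3) * (x - 3) * (3 - 9 * x + 9 * x\<^sup>2 - 2 * x ^ 3)
        = - (8/9 * x * (2 * x - 3) * (3 - x) * (3 - 9 * x + 9 * x\<^sup>2 - 2 * x ^ 3))"
      by algebra
    ultimately show "exp (-2 * x) * (8/9 * x * (2 * x - 3) * (x - 3) * (3 - 9 * x + 9 * x\<^sup>2 - 2 * x ^ 3)) \<le> 0"
      by (metis exp_ge_zero mult_nonneg_nonpos neg_le_0_iff_le)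
  qed (use assms True in auto)
next
  case False
  have "exp (-2 * t) * energy_poly 3 t \<le> exp (-2 * t) * (27/2 * exp (2 * t - 3))"
    using energy_poly_3_tail[of t] False by simp
  also have "\<dots> = exp (-2 * (3/2)) * energy_poly 3 (3/2)"
    by (simp add: energy_poly_3 energy_poly_2 power2_eq_square flip: exp_add)
  finally show ?thesis .
qed

lemma energy_poly_4_at_max: "energy_poly 4 (3 - sqrt 3) = 96 * (33 - 19 * sqrt 3)"
proof -
  have "energy_poly 4 (3 - s) - 96 * (33 - 19 * s) = (s\<^sup>2 - 3) *
      (972 - 456 * s + 596/3 * s\<^sup>2 - 248/3 * s ^ 3 + 244/9 * s ^ 4 - 16/3 * s ^ 5 + 4/9 * s ^ 6)" for s :: real
    unfolding energy_poly_4 energy_poly_3 energy_poly_2 by algebra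
  from this[of "sqrt 3"] show ?thesis
    by simp
qed

lemma energy_4_le_max:
  assumes "0 \<le> t"
  shows "exp (-2 * t) * energy_poly 4 t \<le> exp (-2 * (3 - sqrt 3)) * energy_poly 4 (3 - sqrt 3)"
proof -
  define t0 where "t0 = 3 - sqrt 3"
  have "sqrt 3 < (7/4 :: real)"
    by (rule real_less_lsqrt) (auto simp: power2_eq_square)
  then have t0: "5/4 < t0" "t0 < 2"
    by (auto simp: t0_def)
  have quadratic: "x\<^sup>2 - 6 * x + 6 = (3 - x)\<^sup>2 - (sqrt 3)\<^sup>2" for x :: real
    by (simp add: power2_eq_square algebra_simps)
  have peak: "exp (-2 * x) * energy_poly 4 x \<le> exp (-2 * t0) * energy_poly 4 t0" if "0 \<le> x" "x \<le> 2" for x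
  proof (rule unimodal_le_peak[OF energy_4_deriv, where a=0 and b=2])
    fix x :: real
    assume x: "0 < x" "x < t0"
    then have "sqrt 3 \<le> 3 - x"
      by (simp add: t0_def)
    then have "(sqrt 3)\<^sup>2 \<le> (3 - x)\<^sup>2"
      by (intro power_mono) auto
    then have "0 \<le> x\<^sup>2 - 6 * x + 6"
      unfolding quadratic by simp
    then have "0 \<le> 8/9 * x * (x\<^sup>2 - 6 * x + 6) * (2 - x) * (x ^ 4 - 8 * x ^ 3 + 18 * x\<^sup>2 - 12 * x + 3)"
      using x t0 by (intro mult_nonneg_nonneg energy_4_critical_factor_nonneg) auto
    moreover have "- 8/9 * x * (x\<^sup>2 - 6 * x + 6) * (x - 2) = 8/9 * x * (x\<^sup>2 - 6 * x + 6) * (2 - x)"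
      by algebra
    ultimately show "0 \<le> exp (-2 * x) * (- 8/9 * x * (x\<^sup>2 - 6 * x + 6) * (x - 2) *
        (x ^ 4 - 8 * x ^ 3 + 18 * x\<^sup>2 - 12 * x + 3))"
      by (metis exp_ge_zero mult_nonneg_nonneg)
  next
    fix x :: real
    assume x: "t0 < x" "x < 2"
    then have "3 - x \<le> sqrt 3" "0 \<le> 3 - x"
      by (auto simp: t0_def)
    then have "(3 - x)\<^sup>2 \<le> (sqrt 3)\<^sup>2"
      by (intro power_mono) auto
    then have "0 \<le> - (x\<^sup>2 - 6 * x + 6)"
      unfolding quadratic by simp
    then have "0 \<le> 8/9 * x * (- (x\<^sup>2 - 6 * x + 6)) * (2 - x) * (x ^ 4 - 8 * x ^ 3 + 18 * x\<^sup>2 - 12 * x + 3)"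
      using x t0 by (intro mult_nonneg_nonneg energy_4_critical_factor_nonneg) auto
    moreover have "- 8/9 * x * (x\<^sup>2 - 6 * x + 6) * (x - 2) * (x ^ 4 - 8 * x ^ 3 + 18 * x\<^sup>2 - 12 * x + 3)
        = - (8/9 * x * (- (x\<^sup>2 - 6 * x + 6)) * (2 - x) * (x ^ 4 - 8 * x ^ 3 + 18 * x\<^sup>2 - 12 * x + 3))"
      by algebra
    ultimately show "exp (-2 * x) * (- 8/9 * x * (x\<^sup>2 - 6 * x + 6) * (x - 2) *
        (x ^ 4 - 8 * x ^ 3 + 18 * x\<^sup>2 - 12 * x + 3)) \<le> 0"
      by (metis exp_ge_zero mult_nonneg_nonpos neg_le_0_iff_le)
  qed (use that in auto)
  show ?thesis
  proof (cases "t \<le> 2")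
    case True
    then show ?thesis
      using peak assms by (simp add: t0_def)
  next
    case False
    have "exp (-2 * t) * energy_poly 4 t \<le> exp (-2 * t) * (42/5 * exp (2 * t - 5/2))"
      using energy_poly_4_tail[of t] False by simp
    also have "\<dots> = exp (-2 * (5/4)) * 42/5"
      by (simp flip: exp_add)
    also have "\<dots> \<le> exp (-2 * (5/4)) * energy_poly 4 (5/4)"
      by (simp add: energy_poly_4 energy_poly_3 energy_poly_2 power2_eq_square power3_eq_cube)
    also have "\<dots> \<le> exp (-2 * t0) * energy_poly 4 t0"
      using peak[of "5/4"] by simp
    finally show ?thesis
      by (simp add: t0_def)
  qed
qed

lemma B0_sharp_coeff_bound:
  assumes "0 < t0" "\<And>t. 0 \<le> t \<Longrightarrow> exp (-2 * t) * energy_poly n t \<le> exp (-2 * t0) * energy_poly n t0"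
  shows "(\<forall>f\<in>B0. (\<Sum>j\<in>{1..n}. (cmod (taylor_coeff f j))\<^sup>2) \<le> exp (-2 * t0) * energy_poly n t0)
       \<and> (\<exists>t>0. (\<Sum>j\<in>{1..n}. (cmod (taylor_coeff (extremal t) j))\<^sup>2) = exp (-2 * t0) * energy_poly n t0)"
proof
  have "0 \<le> exp (-2 * t0) * energy_poly n t0"
    by (simp add: energy_poly_def sum_nonneg)
  moreover have "(\<Sum>j\<in>{1..n}. (cmod (taylor_coeff (extremal t) j))\<^sup>2) \<le> exp (-2 * t0) * energy_poly n t0"
    if "0 < t" for t
    using assms(2)[of t] that unfolding extremal_coeff_square_sum by simp
  ultimately show "\<forall>f\<in>B0. (\<Sum>j\<in>{1..n}. (cmod (taylor_coeff f j))\<^sup>2) \<le> exp (-2 * t0) * energy_poly n t0"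
    by (blast intro: B0_coeff_square_sum_le)
  show "\<exists>t>0. (\<Sum>j\<in>{1..n}. (cmod (taylor_coeff (extremal t) j))\<^sup>2) = exp (-2 * t0) * energy_poly n t0"
    using assms(1) unfolding extremal_coeff_square_sum by blast
qed

theorem lemma11:
  shows "(\<forall>f\<in>B0. (\<Sum>j\<in>{1..2}. (cmod (taylor_coeff f j))\<^sup>2) \<le> 32 / exp 4)
       \<and> (\<forall>f\<in>B0. (\<Sum>j\<in>{1..3}. (cmod (taylor_coeff f j))\<^sup>2) \<le> 27 / (2 * exp 3))
       \<and> (\<forall>f\<in>B0. (\<Sum>j\<in>{1..4}. (cmod (taylor_coeff f j))\<^sup>2)
              \<le> 96 * (33 - 19 * sqrt 3) * exp (2 * sqrt 3) / exp 6)
       \<and> (\<exists>t>0. (\<Sum>j\<in>{1..2}. (cmod (taylor_coeff (extremal t) j))\<^sup>2) = 32 / exp 4)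
       \<and> (\<exists>t>0. (\<Sum>j\<in>{1..3}. (cmod (taylor_coeff (extremal t) j))\<^sup>2) = 27 / (2 * exp 3))
       \<and> (\<exists>t>0. (\<Sum>j\<in>{1..4}. (cmod (taylor_coeff (extremal t) j))\<^sup>2)
              = 96 * (33 - 19 * sqrt 3) * exp (2 * sqrt 3) / exp 6)"
proof -
  have "sqrt 3 < (3 :: real)"
    by (rule real_less_lsqrt) (auto simp: power2_eq_square)
  moreover have "exp (-2 * 2) * energy_poly 2 2 = 32 / exp 4"
    by (simp add: energy_poly_2 exp_minus field_simps)
  moreover have "exp (-2 * (3/2)) * energy_poly 3 (3/2) = 27 / (2 * exp 3)"
    by (simp add: energy_poly_3 energy_poly_2 power2_eq_square exp_minus field_simps)
  moreover have "exp (-2 * (3 - sqrt 3)) * energy_poly 4 (3 - sqrt 3)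
      = 96 * (33 - 19 * sqrt 3) * exp (2 * sqrt 3) / exp 6"
  proof -
    have "exp (-2 * (3 - sqrt 3)) = exp (2 * sqrt 3) / exp (6 :: real)"
      by (simp add: algebra_simps flip: exp_diff)
    then show ?thesis
      by (simp add: energy_poly_4_at_max)
  qed
  ultimately show ?thesis
    using B0_sharp_coeff_bound[OF _ energy_2_le_max] B0_sharp_coeff_bound[OF _ energy_3_le_max]
      B0_sharp_coeff_bound[OF _ energy_4_le_max]
    by simp
qed

end
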